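(* In a pairing heap, insertion takes $O(1)$ amortized time with respect to the potential $\Phi$.
   Context: A pairing heap is a heap-ordered rooted ordered tree (the "general view"): each node stores a key, has zero or more children ordered from left to right, and every child has a strictly larger key than its parent. It is stored in the "binary view" via the leftmost-child/right-sibling correspondence: the left child of $x$ in the binary view is the leftmost child of $x$ in the general view, and the right child of $x$ in the binary view is the next sibling to the right of $x$ in the general view. Pairing two heap-ordered trees makes the root with the larger key the leftmost child of the other root. Operations: make-heap returns an empty heap; get-min returns the root key; insert creates a new node, which becomes the root if the heap is empty and otherwise is paired with the root; decrease-key$(p,y)$ (with $y$ strictly less than the current key of the node $p$) sets the key to $y$ and, if the node is not the root, detaches it (with its general-view subtree) from its parent and pairs it with the root; delete-min removes the root, then (first pass) pairs the root's former children in consecutive pairs from left to right, then (second pass) repeatedly pairs the two rightmost remaining trees until one tree remains. The actual cost of an operation is $1$ plus the number of pairings it performs, and its amortized cost is its actual cost plus the resulting change in $\Phi$. The heap is assumed to arise from a sequence of such operations starting from an empty heap. Sticky size: $N$ is initially $1$; after every heap operation, if $n \ge 2N$ then $N$ is doubled, and if $n \le N/2$ then $N$ is halved, where $n$ is the current number of elements. Let $\lg = \log_2$. For a node $x$, $|x|$ is the number of nodes in the subtree rooted at $x$ in the binary view, and $x_L$, $x_R$ are its left and right children in the binary view (a missing child has size $0$). Node potential $\phi_x$: if $|x_L| > \lg N$ and $|x_R| > \lg N$, $x$ is large and $\phi_x = 400 + 100\lg|x|$; if $|x_L| \le \lg N < |x_R|$, $x$ is mixed and $\phi_x = 400 + 100\frac{|x_L|}{\lg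 N}\lg|x|$ (symmetrically, if $|x_R| \le \lg N < |x_L|$, $\phi_x = 400 + 100\frac{|x_R|}{\lg N}\lg|x|$); if both $|x_L|,|x_R| \le \lg N$, $x$ is small and $\phi_x = 0$. Edge potential: an edge of the binary view joining a large node to its right child that is also large has potential $-7$; all other edges have potential $0$. $\Phi = 900|N-n| + \sum_x \phi_x + (\text{sum of edge potentials})$. *)

theory Defs
  imports Complex_Main
begin

text \<open>Binary view of a pairing heap: Node left id key right, where left is the
leftmost child and right is the next sibling (general view).  Each node carries
a unique identifier (the "pointer" used by decrease-key) and a key.
A heap is represented by the binary view of its root (whose right child is Leaf);
the empty heap is Leaf.\<close>

datatype 'k tree = Leaf | Node "'k tree" nat 'k "'k tree"

fun bsize :: "'k tree \<Rightarrow> nat" where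
  "bsize Leaf = 0"
| "bsize (Node l i k r) = bsize l + 1 + bsize r"

fun ids :: "'k tree \<Rightarrow> nat set" where
  "ids Leaf = {}"
| "ids (Node l i k r) = insert i (ids l \<union> ids r)"

fun lookup :: "nat \<Rightarrow> 'k tree \<Rightarrow> 'k option" where
  "lookup p Leaf = None"
| "lookup p (Node l i k r) =
     (if i = p then Some k else (case lookup p l of Some x \<Rightarrow> Some x | None \<Rightarrow> lookup p r))"

text \<open>Pairing of two heap-ordered trees (given by their roots, right child Leaf):
the root with the larger key becomes the leftmost child of the other root.
Ties: the first argument stays the root.\<close>
fun link :: "'k::linorder tree \<Rightarrow> 'k tree \<Rightarrow> 'k tree" where
  "link (Node l1 i1 k1 r1) (Node l2 i2 k2 r2) =
     (if k1 \<le> k2 then Node (Node l2 i2 k2 l1) i1 k1 Leaf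
      else Node (Node l1 i1 k1 l2) i2 k2 Leaf)"
| "link Leaf t = t"
| "link t Leaf = t"

text \<open>Operations return the new heap and the number of pairings performed.\<close>

definition ins :: "nat \<Rightarrow> 'k::linorder \<Rightarrow> 'k tree \<Rightarrow> 'k tree \<times> nat" where
  "ins i k h = (if h = Leaf then (Node Leaf i k Leaf, 0) else (link h (Node Leaf i k Leaf), 1))"

fun siblings :: "'k tree \<Rightarrow> 'k tree list" where
  "siblings Leaf = []"
| "siblings (Node l i k r) = Node l i k Leaf # siblings r"

fun pass1 :: "'k::linorder tree list \<Rightarrow> 'k tree list \<times> nat" where
  "pass1 (a # b # rest) = (let (ts, c) = pass1 rest in (link a b # ts, c + 1))"
| "pass1 [a] = ([a], 0)"
| "pass1 [] = ([], 0)"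

fun pass2 :: "'k::linorder tree list \<Rightarrow> 'k tree \<times> nat" where
  "pass2 [] = (Leaf, 0)"
| "pass2 [t] = (t, 0)"
| "pass2 (t # ts) = (let (u, c) = pass2 ts in (link t u, c + 1))"

fun delmin :: "'k::linorder tree \<Rightarrow> 'k tree \<times> nat" where
  "delmin Leaf = (Leaf, 0)"
| "delmin (Node l i k r) =
     (let (ts, c1) = pass1 (siblings l); (t, c2) = pass2 ts in (t, c1 + c2))"

fun detach :: "nat \<Rightarrow> 'k tree \<Rightarrow> 'k tree \<times> 'k tree option" where
  "detach p Leaf = (Leaf, None)"
| "detach p (Node l i k r) =
     (if i = p then (r, Some (Node l i k Leaf))
      else (case detach p l of
              (l', Some x) \<Rightarrow> (Node l' i k r, Some x)
            | (_, None) \<Rightarrow> (case detach p r of (r', s) \<Rightarrow> (Node l i k r', s))))"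

fun deckey :: "nat \<Rightarrow> 'k::linorder \<Rightarrow> 'k tree \<Rightarrow> 'k tree \<times> nat" where
  "deckey p y Leaf = (Leaf, 0)"
| "deckey p y (Node l i k r) =
     (if i = p then (Node l i y r, 0)
      else (case detach p l of
              (l', Some (Node lx ix kx rx)) \<Rightarrow> (link (Node l' i k r) (Node lx ix y Leaf), 1)
            | _ \<Rightarrow> (Node l i k r, 0)))"

text \<open>Sticky size update after an operation (N stays a power of 2, N \<ge> 1).\<close>
definition sticky :: "nat \<Rightarrow> nat \<Rightarrow> nat" where
  "sticky n N = (if n \<ge> 2 * N then 2 * N else if 2 * n \<le> N \<and> N \<ge> 2 then N div 2 else N)"

inductive reach :: "'k::linorder tree \<Rightarrow> nat \<Rightarrow> bool" where
  init: "reach Leaf 1"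
| insert: "reach h N \<Longrightarrow> i \<notin> ids h \<Longrightarrow>
      reach (fst (ins i k h)) (sticky (bsize (fst (ins i k h))) N)"
| getmin: "reach h N \<Longrightarrow> h \<noteq> Leaf \<Longrightarrow> reach h (sticky (bsize h) N)"
| deletemin: "reach h N \<Longrightarrow> h \<noteq> Leaf \<Longrightarrow>
      reach (fst (delmin h)) (sticky (bsize (fst (delmin h))) N)"
| decreasekey: "reach h N \<Longrightarrow> lookup p h = Some x \<Longrightarrow> y < x \<Longrightarrow>
      reach (fst (deckey p y h)) (sticky (bsize (fst (deckey p y h))) N)"

definition is_large :: "real \<Rightarrow> 'k tree \<Rightarrow> bool" where
  "is_large lgN t = (case t of Leaf \<Rightarrow> False
     | Node l i k r \<Rightarrow> real (bsize l) > lgN \<and> real (bsize r) > lgN)"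

fun node_phi :: "real \<Rightarrow> 'k tree \<Rightarrow> real" where
  "node_phi lgN Leaf = 0"
| "node_phi lgN (Node l i k r) =
     (let a = real (bsize l); b = real (bsize r); s = real (bsize (Node l i k r)) in
      if a > lgN \<and> b > lgN then 400 + 100 * log 2 s
      else if a \<le> lgN \<and> lgN < b then 400 + 100 * (a / lgN) * log 2 s
      else if b \<le> lgN \<and> lgN < a then 400 + 100 * (b / lgN) * log 2 s
      else 0)"

fun sum_phi :: "real \<Rightarrow> 'k tree \<Rightarrow> real" where
  "sum_phi lgN Leaf = 0"
| "sum_phi lgN (Node l i k r) = node_phi lgN (Node l i k r) + sum_phi lgN l + sum_phi lgN r"

fun sum_edge :: "real \<Rightarrow> 'k tree \<Rightarrow> real" where
  "sum_edge lgN Leaf = 0"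
| "sum_edge lgN (Node l i k r) =
     (if is_large lgN (Node l i k r) \<and> is_large lgN r then -7 else 0)
     + sum_edge lgN l + sum_edge lgN r"

definition Phi :: "'k tree \<Rightarrow> nat \<Rightarrow> real" where
  "Phi h N = (let lgN = log 2 (real N) in
     900 * \<bar>real N - real (bsize h)\<bar> + sum_phi lgN h + sum_edge lgN h)"

definition insert_amortized :: "nat \<Rightarrow> 'k::linorder \<Rightarrow> 'k tree \<Rightarrow> nat \<Rightarrow> real" where
  "insert_amortized i k h N = (let (h', c) = ins i k h; N' = sticky (bsize h') N in
     real (1 + c) + Phi h' N' - Phi h N)"

end

theory Submission
  imports Defs
begin

text \<open>Every reachable heap is a single tree whose root has no right sibling, and N
stays within a factor 2 of n.  Inserting links a singleton to the root: the two
nodes involved each lack a child and so carry potential at most 400, the rest of the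
tree keeps its node and edge potentials, and n grows by one.  If N stays put, this
bounds the amortized cost by a constant.  If N doubles, then n = 2N after the insertion,
so the term 900|N - n| drops from 900(N - 1) to 0; this pays for losing all edge
potentials (at least -7 per node), while node potentials only decrease as lg N grows.\<close>

fun is_root :: "'k tree \<Rightarrow> bool" where
  "is_root Leaf = True"
| "is_root (Node l i k r) = (r = Leaf)"

lemma is_root_link_bsize:
  assumes "is_root a" "is_root b"
  shows "is_root (link a b) \<and> bsize (link a b) = bsize a + bsize b"
  using assms by (cases a; cases b) auto

lemma siblings_is_root_bsize:
  "(\<forall>t\<in>set (siblings h). is_root t) \<and> sum_list (map bsize (siblings h)) = bsize h"
  by (induction h) auto

lemma pass1_is_root_bsize:
  "\<forall>t\<in>set ts. is_root t \<Longrightarrow>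
   (\<forall>t\<in>set (fst (pass1 ts)). is_root t) \<and>
   sum_list (map bsize (fst (pass1 ts))) = sum_list (map bsize ts)"
proof (induction ts rule: pass1.induct)
  case (1 a b rest)
  obtain ts c where "pass1 rest = (ts, c)" by fastforce
  with 1 is_root_link_bsize[of a b] show ?case by auto
qed auto

lemma pass2_is_root_bsize:
  "\<forall>t\<in>set ts. is_root t \<Longrightarrow>
   is_root (fst (pass2 ts)) \<and> bsize (fst (pass2 ts)) = sum_list (map bsize ts)"
proof (induction ts rule: pass2.induct)
  case (3 t v va)
  obtain u c where "pass2 (v # va) = (u, c)" by fastforce
  with 3 is_root_link_bsize[of t u] show ?case by auto
qed auto

lemma delmin_is_root_bsize:
  assumes "is_root h" "h \<noteq> Leaf"
  shows "is_root (fst (delmin h)) \<and> bsize (fst (delmin h)) + 1 = bsize h"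
proof -
  obtain l i k where h: "h = Node l i k Leaf" using assms by (cases h) auto
  obtain ts c1 where p1: "pass1 (siblings l) = (ts, c1)" by fastforce
  obtain t c2 where p2: "pass2 ts = (t, c2)" by fastforce
  have "(\<forall>t\<in>set ts. is_root t) \<and> sum_list (map bsize ts) = bsize l"
    using pass1_is_root_bsize[of "siblings l"] siblings_is_root_bsize[of l] p1 by auto
  then have "is_root t \<and> bsize t = bsize l" using pass2_is_root_bsize[of ts] p2 by auto
  then show ?thesis using h p1 p2 by auto
qed

lemma detach_bsize:
  "detach p t = (t', s) \<Longrightarrow> (s = None \<longrightarrow> t' = t) \<and>
     (\<forall>x. s = Some x \<longrightarrow> bsize t' + bsize x = bsize t \<and> is_root x)"
proof (induction t arbitrary: t' s)
  case (Node l i k r)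
  obtain l' s1 where dl: "detach p l = (l', s1)" by fastforce
  obtain r' s2 where dr: "detach p r = (r', s2)" by fastforce
  show ?case
    using Node.prems Node.IH(1)[OF dl] Node.IH(2)[OF dr] dl dr
    by (cases "i = p"; cases s1) auto
qed auto

lemma deckey_is_root_bsize:
  assumes "is_root h"
  shows "is_root (fst (deckey p y h)) \<and> bsize (fst (deckey p y h)) = bsize h"
proof (cases h)
  case (Node l i k r)
  obtain l' s where d: "detach p l = (l', s)" by fastforce
  have "r = Leaf" using assms Node by simp
  with Node d detach_bsize[OF d] show ?thesis
    by (cases "i = p"; cases s; auto split: tree.split)
qed simp

definition heap_invariant :: "'k tree \<Rightarrow> nat \<Rightarrow> bool" where
  "heap_invariant h N \<longleftrightarrow>
     is_root h \<and> N \<ge> 1 \<and> bsize h < 2 * N \<and> (N \<ge> 2 \<longrightarrow> N < 2 * bsize h)"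

lemma sticky_bounds:
  assumes "N \<ge> 1" "n < 2 * N" "N \<ge> 2 \<longrightarrow> N < 2 * n" "n' \<le> n + 1" "n \<le> n' + 1"
  shows "sticky n' N \<ge> 1 \<and> n' < 2 * sticky n' N \<and> (sticky n' N \<ge> 2 \<longrightarrow> sticky n' N < 2 * n')"
  using assms unfolding sticky_def by (auto; presburger)

lemma reach_heap_invariant: "reach h N \<Longrightarrow> heap_invariant h N"
proof (induction rule: reach.induct)
  case init
  then show ?case by (simp add: heap_invariant_def)
next
  case (insert h N i k)
  then have "is_root (fst (ins i k h)) \<and> bsize (fst (ins i k h)) = bsize h + 1"
    using is_root_link_bsize[of h "Node Leaf i k Leaf"] by (auto simp: ins_def heap_invariant_def)
  with insert sticky_bounds[of N "bsize h" "bsize (fst (ins i k h))"] show ?case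
    by (auto simp: heap_invariant_def)
next
  case (getmin h N)
  then show ?case using sticky_bounds[of N "bsize h" "bsize h"] by (auto simp: heap_invariant_def)
next
  case (deletemin h N)
  then have "is_root (fst (delmin h)) \<and> bsize (fst (delmin h)) + 1 = bsize h"
    using delmin_is_root_bsize by (auto simp: heap_invariant_def)
  with deletemin sticky_bounds[of N "bsize h" "bsize (fst (delmin h))"] show ?case
    by (auto simp: heap_invariant_def)
next
  case (decreasekey h N p x y)
  then have "is_root (fst (deckey p y h)) \<and> bsize (fst (deckey p y h)) = bsize h"
    using deckey_is_root_bsize by (auto simp: heap_invariant_def)
  with decreasekey sticky_bounds[of N "bsize h" "bsize (fst (deckey p y h))"] show ?case
    by (auto simp: heap_invariant_def)
qed

lemma node_phi_nonneg: "0 \<le> L \<Longrightarrow> 0 \<le> node_phi L t"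
  by (cases t) (auto simp: Let_def)

lemma scaled_le_self:
  fixes a L g :: real
  assumes "0 \<le> a" "a \<le> L" "0 \<le> g"
  shows "a / L * g \<le> g"
  using assms mult_right_mono[of "a / L" 1 g] by (cases "L = 0") auto

lemma scaled_antimono:
  fixes a L L' g :: real
  assumes "0 \<le> a" "a \<le> L" "L \<le> L'" "0 \<le> g"
  shows "a / L' * g \<le> a / L * g"
  using assms by (cases "L = 0") (auto intro!: mult_right_mono divide_left_mono)

lemma node_phi_antimono:
  assumes "0 \<le> L" "L \<le> L'"
  shows "node_phi L' t \<le> node_phi L t"
proof (cases t)
  case (Node l i k r)
  define a where "a = real (bsize l)"
  define b where "b = real (bsize r)"
  define g where "g = log 2 (real (bsize (Node l i k r)))"
  have "0 \<le> a" "0 \<le> b" "0 \<le> g" by (simp_all add: a_def b_def g_def)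
  then have scaled:
    "a \<le> L' \<Longrightarrow> a / L' * g \<le> g" "b \<le> L' \<Longrightarrow> b / L' * g \<le> g"
    "a \<le> L \<Longrightarrow> a / L' * g \<le> a / L * g" "b \<le> L \<Longrightarrow> b / L' * g \<le> b / L * g"
    using scaled_le_self scaled_antimono assms(2) by auto
  show ?thesis
    using node_phi_nonneg[OF assms(1), of t] assms scaled
    unfolding Node node_phi.simps Let_def a_def[symmetric] b_def[symmetric] g_def[symmetric]
    by (auto simp: mult.assoc)
qed simp

lemma sum_phi_antimono: "0 \<le> L \<Longrightarrow> L \<le> L' \<Longrightarrow> sum_phi L' t \<le> sum_phi L t"
  by (induction t) (auto intro: add_mono node_phi_antimono simp del: node_phi.simps)

lemma sum_edge_nonpos: "sum_edge L t \<le> 0"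
  by (induction t) auto

lemma sum_edge_ge: "- 7 * real (bsize t) \<le> sum_edge L t"
  by (induction t) auto

lemma link_singleton_potential:
  assumes "0 \<le> L"
  shows "sum_phi L (link (Node l i' k' Leaf) (Node Leaf i k Leaf)) \<le> 800 + sum_phi L l"
    and "sum_edge L (link (Node l i' k' Leaf) (Node Leaf i k Leaf)) = sum_edge L l"
proof -
  have "node_phi L (Node Leaf i k l) \<le> 400" "node_phi L (Node l i' k' Leaf) \<le> 400"
    "node_phi L (Node (Node Leaf i k l) i' k' Leaf) \<le> 400"
    "node_phi L (Node (Node l i' k' Leaf) i k Leaf) \<le> 400"
    using assms by (auto simp: Let_def)
  then show "sum_phi L (link (Node l i' k' Leaf) (Node Leaf i k Leaf)) \<le> 800 + sum_phi L l"
    by (auto simp del: node_phi.simps)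
  show "sum_edge L (link (Node l i' k' Leaf) (Node Leaf i k Leaf)) = sum_edge L l"
    using assms by (simp add: is_large_def)
qed

lemma insert_amortized_le:
  assumes "heap_invariant h N"
  shows "insert_amortized i k h N \<le> 2000"
proof (cases h)
  case Leaf
  then have "N = 1" using assms by (simp add: heap_invariant_def)
  with Leaf show ?thesis by (simp add: insert_amortized_def ins_def sticky_def Phi_def)
next
  case Node
  with assms obtain l i' k' where h: "h = Node l i' k' Leaf"
    by (auto simp: heap_invariant_def)
  have N: "N \<ge> 1" "bsize h < 2 * N" "N \<ge> 2 \<longrightarrow> N < 2 * bsize h"
    using assms by (auto simp: heap_invariant_def)
  define h' where "h' = link h (Node Leaf i k Leaf)"
  define N' where "N' = sticky (bsize h') N"
  define L where "L = log 2 (real N)"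
  define L' where "L' = log 2 (real N')"
  have L: "0 \<le> L" using N by (simp add: L_def)
  have bsize: "bsize h = bsize l + 1" "bsize h' = bsize l + 2"
    using h by (simp_all add: h'_def)
  have h'_potential: "sum_phi L' h' \<le> 800 + sum_phi L' l" "sum_edge L' h' = sum_edge L' l"
    if "0 \<le> L'" for L'
    unfolding h'_def h using link_singleton_potential[OF that] by blast+
  have h_potential: "sum_phi L l \<le> sum_phi L h" "sum_edge L h = sum_edge L l"
    using h node_phi_nonneg[OF L, of h] by (auto simp: is_large_def)
  have amortized: "insert_amortized i k h N
      = 2 + 900 * \<bar>real N' - real (bsize h')\<bar> + sum_phi L' h' + sum_edge L' h'
          - (900 * \<bar>real N - real (bsize h)\<bar> + sum_phi L h + sum_edge L h)"
  proof -
    have "ins i k h = (h', 1)" using h by (simp add: ins_def h'_def)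
    then show ?thesis
      by (simp add: insert_amortized_def Phi_def Let_def N'_def L_def L'_def)
  qed
  have "N' = N \<or> N' = 2 * N \<and> bsize h' = 2 * N"
    using N bsize unfolding N'_def sticky_def by auto
  then show ?thesis
  proof
    assume "N' = N"
    then have "L' = L" by (simp add: L_def L'_def)
    moreover have "\<bar>real N' - real (bsize h')\<bar> \<le> \<bar>real N - real (bsize h)\<bar> + 1"
      using \<open>N' = N\<close> bsize by simp
    ultimately show ?thesis
      using amortized h_potential h'_potential[OF L] by simp
  next
    assume doubled: "N' = 2 * N \<and> bsize h' = 2 * N"
    then have "L' = L + 1" using N by (simp add: L_def L'_def log_mult)
    then have "sum_phi L' l \<le> sum_phi L l" using sum_phi_antimono[OF L, of L'] by simp
    with doubled \<open>L' = L + 1\<close> show ?thesis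
      using amortized h_potential bsize h'_potential[of L'] L
        sum_edge_nonpos[of L' l] sum_edge_ge[of l L] by simp
  qed
qed

theorem lemma2:
  "\<exists>C::real. \<forall>(h::'k::linorder tree) N i (k::'k).
     reach h N \<longrightarrow> i \<notin> ids h \<longrightarrow> insert_amortized i k h N \<le> C"
  using insert_amortized_le reach_heap_invariant by blast

end
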